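(* Assume (H2). Then for any $q,q'\in\mathbb R^d$ with $q\ne q'$ and any $A>0$ there is $\kappa>0$ such that \[\lim_{\delta\to0}\limsup_{n\to\infty}\sup_{z\in E:|z-nq|<\delta n}\frac1n\log\int_0^{\kappa n}\mathbb P_z\bigl(Z(t)\in nB(q',\delta)\bigr)\,dt\ \le\ -A.\]
   Context: Let $E\subset\mathbb R^d$ be unbounded and $(Z(t))_{t\ge0}$ a continuous-time strong Markov process on $E$ with right-continuous paths having left limits; $\mathbb P_z,\mathbb E_z$ denote probability and expectation given $Z(0)=z$. For $B\subset\mathbb R^d$ and $n>0$, $nB=\{nx:x\in B\}$; $B(x,r)$ is the open ball of center $x$ and radius $r$. (H2): the function $\hat\varphi(a)=\sup_{z\in E}\sup_{t\in[0,1]}\mathbb E_z(e^{a\cdot(Z(t)-z)})$ is finite for every $a\in\mathbb R^d$. *)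

theory Defs
  imports "HOL-Probability.Probability"
begin

definition cadlag :: "(real \<Rightarrow> 'a::topological_space) \<Rightarrow> bool" where
  "cadlag f \<longleftrightarrow> (\<forall>t\<ge>0. continuous (at_right t) f) \<and> (\<forall>t>0. \<exists>l. (f \<longlongrightarrow> l) (at_left t))"

text \<open>M is the underlying measurable space, F a filtration to which Z is adapted, and
  P z the law under which Z(0) = z (so P_z = P z, E_z = integration w.r.t. P z).\<close>
definition strong_markov_process ::
  "'a::euclidean_space set \<Rightarrow> 'w measure \<Rightarrow> (real \<Rightarrow> 'w measure) \<Rightarrow> ('a \<Rightarrow> 'w measure)
    \<Rightarrow> (real \<Rightarrow> 'w \<Rightarrow> 'a) \<Rightarrow> bool" where
  "strong_markov_process E M F P Z \<longleftrightarrow>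
     (\<forall>t. subalgebra M (F t)) \<and> (\<forall>s t. s \<le> t \<longrightarrow> sets (F s) \<subseteq> sets (F t)) \<and>
     (\<forall>t\<ge>0. Z t \<in> borel_measurable (F t)) \<and>
     (\<forall>\<omega>\<in>space M. \<forall>t\<ge>0. Z t \<omega> \<in> E) \<and>
     (\<forall>\<omega>\<in>space M. cadlag (\<lambda>t. Z t \<omega>)) \<and>
     (\<forall>z\<in>E. prob_space (P z) \<and> sets (P z) = sets M) \<and>
     (\<forall>z\<in>E. AE \<omega> in P z. Z 0 \<omega> = z) \<and>
     (\<forall>t\<ge>0. \<forall>B\<in>sets borel.
        (\<lambda>z. measure (P z) {\<omega>\<in>space M. Z t \<omega> \<in> B}) \<in> borel_measurable (restrict_space borel E)) \<and>
     (\<forall>z\<in>E. \<forall>\<tau>. stopping_time F \<tau> \<and> (\<forall>\<omega>\<in>space M. 0 \<le> \<tau> \<omega>) \<longrightarrow>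
        (\<forall>t\<ge>0. \<forall>B\<in>sets borel. \<forall>A\<in>sets M. (\<forall>s. {\<omega>\<in>A. \<tau> \<omega> \<le> s} \<in> sets (F s)) \<longrightarrow>
          measure (P z) {\<omega>\<in>A. Z (\<tau> \<omega> + t) \<omega> \<in> B} =
          (\<integral>\<omega>. indicator A \<omega> * measure (P (Z (\<tau> \<omega>) \<omega>)) {\<omega>'\<in>space M. Z t \<omega>' \<in> B} \<partial>P z)))"

definition eln :: "real \<Rightarrow> ereal" where
  "eln x = (if x \<le> 0 then -\<infinity> else ereal (ln x))"

end

theory Submission
  imports Defs "HOL-Real_Asymp.Real_Asymp"
begin

text \<open>Pick a with a \<bullet> (q' - q) = A + 2 and let \<Phi> bound the exponential moments
  E_z exp(a \<bullet> (Z t - z)) for t \<le> 1, which (H2) makes finite. By the Markov property these moments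
  are submultiplicative in time, so they are at most \<Phi> powr (t + 1) at time t. For
  2 |a| \<delta> = 1, every point x of n B(q', \<delta>) and every start z within \<delta> n of n q satisfy
  a \<bullet> (x - z) \<ge> n (A + 1), so the exponential Chebyshev inequality bounds
  P_z(Z t \<in> n B(q', \<delta>)) by exp(- n (A + 1) + (t + 1) ln \<Phi>). Integrating up to time \<kappa> n with
  \<kappa> ln \<Phi> \<le> 1 yields the bound -A at this \<delta>; the expression is monotone in \<delta>, so its limit
  as \<delta> \<rightarrow> 0 exists and is no larger.\<close>

lemma dyadic_ceiling_approx:
  fixes t :: real
  assumes "t \<ge> 0"
  shows "(\<lambda>m. real (nat \<lceil>t * 2^m\<rceil>) / 2^m) \<longlonglongrightarrow> t"
    and "\<And>m. t \<le> real (nat \<lceil>t * 2^m\<rceil>) / 2^m"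
proof -
  have eq: "real (nat \<lceil>t * 2^m\<rceil>) = real_of_int \<lceil>t * 2^m\<rceil>" for m :: nat
    using assms by simp
  show lo: "t \<le> real (nat \<lceil>t * 2^m\<rceil>) / 2^m" for m :: nat
    unfolding eq by (simp add: pos_le_divide_eq)
  have hi: "real (nat \<lceil>t * 2^m\<rceil>) / 2^m \<le> t + (1/2)^m" for m :: nat
  proof -
    have "real_of_int \<lceil>t * 2^m\<rceil> \<le> t * 2^m + 1" by linarith
    then show ?thesis unfolding eq by (simp add: divide_simps power_divide)
  qed
  have "(\<lambda>m. t + (1/2::real)^m) \<longlonglongrightarrow> t + 0"
    by (intro tendsto_add tendsto_const LIMSEQ_realpow_zero) auto
  then show "(\<lambda>m. real (nat \<lceil>t * 2^m\<rceil>) / 2^m) \<longlonglongrightarrow> t"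
    using tendsto_sandwich[OF always_eventually[OF allI[OF lo]] always_eventually[OF allI[OF hi]] tendsto_const]
    by simp
qed

lemma tendsto_at_right_0_INF_mono:
  fixes f :: "real \<Rightarrow> 'b::{complete_linorder, linorder_topology}"
  assumes mono: "\<And>x y. 0 < x \<Longrightarrow> x \<le> y \<Longrightarrow> f x \<le> f y"
  shows "(f \<longlongrightarrow> (INF x\<in>{0<..}. f x)) (at_right 0)"
proof (rule order_tendstoI)
  fix y assume "y < (INF x\<in>{0<..}. f x)"
  then show "eventually (\<lambda>x. y < f x) (at_right 0)"
    using eventually_at_right_less[of "0::real"]
    by (elim eventually_mono) (meson INF_lower greaterThan_iff less_le_trans)
next
  fix y assume "(INF x\<in>{0<..}. f x) < y"
  then obtain x0 where x0: "x0 > 0" "f x0 < y" by (auto simp: INF_less_iff)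
  show "eventually (\<lambda>x. f x < y) (at_right 0)"
    unfolding eventually_at_right[OF x0(1)]
    using x0 mono by (intro exI[of _ x0]) (meson le_less_trans less_imp_le)
qed

lemma eln_mono: "x \<le> y \<Longrightarrow> eln x \<le> eln y"
  by (auto simp: eln_def)

lemma eln_divide_le:
  assumes "x \<le> exp b" and "n > 0"
  shows "eln x / ereal n \<le> ereal (b / n)"
proof (cases "x \<le> 0")
  case False
  then have "ln x \<le> b" using assms(1) by (metis exp_gt_zero ln_exp ln_le_cancel_iff not_le)
  then show ?thesis using False assms(2) by (simp add: eln_def divide_right_mono)
qed (use assms(2) in \<open>simp add: eln_def divide_ereal_def\<close>)

lemma inner_scaled_displacement_ge:
  fixes a q q' y z :: "'a::real_inner"
  assumes y: "norm (y - q') < \<delta>" and z: "norm (z - n *\<^sub>R q) < \<delta> * n" and n: "0 \<le> n"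
  shows "n * (a \<bullet> (q' - q) - 2 * norm a * \<delta>) \<le> a \<bullet> (n *\<^sub>R y - z)"
proof -
  have split: "a \<bullet> (n *\<^sub>R y - z) = n * (a \<bullet> (y - q')) + n * (a \<bullet> (q' - q)) + a \<bullet> (n *\<^sub>R q - z)"
    by (simp add: algebra_simps inner_diff_right)
  have "- (a \<bullet> (y - q')) \<le> norm a * \<delta>"
    using Cauchy_Schwarz_ineq2[of a "y - q'"] y
    by (smt (verit) mult_left_mono norm_ge_zero)
  then have "- (n * (a \<bullet> (y - q'))) \<le> n * (norm a * \<delta>)"
    using n by (metis minus_mult_right mult_left_mono)
  moreover have "- (a \<bullet> (n *\<^sub>R q - z)) \<le> norm a * (\<delta> * n)"
    using Cauchy_Schwarz_ineq2[of a "n *\<^sub>R q - z"] z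
    by (smt (verit) mult_left_mono norm_ge_zero norm_minus_commute)
  ultimately show ?thesis
    unfolding split by (simp add: algebra_simps)
qed

locale strong_markov =
  fixes E :: "'a::euclidean_space set" and M :: "'w measure" and F :: "real \<Rightarrow> 'w measure"
    and P :: "'a \<Rightarrow> 'w measure" and Z :: "real \<Rightarrow> 'w \<Rightarrow> 'a"
  assumes markov: "strong_markov_process E M F P Z"
begin

lemma measurable_Z: "t \<ge> 0 \<Longrightarrow> Z t \<in> borel_measurable M"
  using markov measurable_from_subalg unfolding strong_markov_process_def by metis

lemma Z_in_E: "\<omega> \<in> space M \<Longrightarrow> t \<ge> 0 \<Longrightarrow> Z t \<omega> \<in> E"
  using markov unfolding strong_markov_process_def by auto

lemma cadlag_Z: "\<omega> \<in> space M \<Longrightarrow> cadlag (\<lambda>t. Z t \<omega>)"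
  using markov unfolding strong_markov_process_def by auto

lemma prob_space_P: "z \<in> E \<Longrightarrow> prob_space (P z)"
  using markov unfolding strong_markov_process_def by auto

lemma sets_P: "z \<in> E \<Longrightarrow> sets (P z) = sets M"
  using markov unfolding strong_markov_process_def by auto

lemma space_P: "z \<in> E \<Longrightarrow> space (P z) = space M"
  by (rule sets_eq_imp_space_eq[OF sets_P])

lemma measurable_Z_P: "z \<in> E \<Longrightarrow> t \<ge> 0 \<Longrightarrow> Z t \<in> borel_measurable (P z)"
  by (subst measurable_cong_sets[OF sets_P refl]) (auto intro: measurable_Z)

lemma measurable_Z_P_restrict_E: "z \<in> E \<Longrightarrow> t \<ge> 0 \<Longrightarrow> Z t \<in> measurable (P z) (restrict_space borel E)"
  by (intro measurable_restrict_space2 measurable_Z_P) (auto simp: space_P Z_in_E)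

lemma measurable_prob_Z_in:
  "t \<ge> 0 \<Longrightarrow> B \<in> sets borel \<Longrightarrow>
    (\<lambda>z. measure (P z) {\<omega>\<in>space M. Z t \<omega> \<in> B}) \<in> borel_measurable (restrict_space borel E)"
  using markov unfolding strong_markov_process_def by auto

lemma emeasure_distr_Z:
  assumes "z \<in> E" "t \<ge> 0" "B \<in> sets borel"
  shows "emeasure (distr (P z) borel (Z t)) B = measure (P z) {\<omega>\<in>space M. Z t \<omega> \<in> B}"
proof -
  interpret prob_space "P z" using prob_space_P[OF assms(1)] .
  have "emeasure (distr (P z) borel (Z t)) B = emeasure (P z) (Z t -` B \<inter> space (P z))"
    by (rule emeasure_distr[OF measurable_Z_P[OF assms(1,2)] assms(3)])
  also have "Z t -` B \<inter> space (P z) = {\<omega>\<in>space M. Z t \<omega> \<in> B}"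
    using space_P[OF assms(1)] by auto
  finally show ?thesis by (simp add: emeasure_eq_measure)
qed

lemma markov_property:
  assumes z: "z \<in> E" and s: "s \<ge> 0" and r: "r \<ge> 0" and B: "B \<in> sets borel"
  shows "measure (P z) {\<omega>\<in>space M. Z (s + r) \<omega> \<in> B} =
     (\<integral>\<omega>. measure (P (Z s \<omega>)) {\<omega>'\<in>space M. Z r \<omega>' \<in> B} \<partial>P z)"
proof -
  have sub: "\<And>t. subalgebra M (F t)"
    using markov unfolding strong_markov_process_def by auto
  have strong: "\<And>\<tau>. stopping_time F \<tau> \<and> (\<forall>\<omega>\<in>space M. 0 \<le> \<tau> \<omega>) \<longrightarrow>
        (\<forall>t\<ge>0. \<forall>B\<in>sets borel. \<forall>A\<in>sets M. (\<forall>s. {\<omega>\<in>A. \<tau> \<omega> \<le> s} \<in> sets (F s)) \<longrightarrow>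
          measure (P z) {\<omega>\<in>A. Z (\<tau> \<omega> + t) \<omega> \<in> B} =
          (\<integral>\<omega>. indicator A \<omega> * measure (P (Z (\<tau> \<omega>) \<omega>)) {\<omega>'\<in>space M. Z t \<omega>' \<in> B} \<partial>P z))"
    using markov z unfolding strong_markov_process_def by blast
  have const_time: "{\<omega>\<in>space M. s \<le> s'} \<in> sets (F s')" for s'
  proof (cases "s \<le> s'")
    case True
    then have "{\<omega>\<in>space M. s \<le> s'} = space (F s')"
      using sub[of s'] by (simp add: subalgebra_def)
    then show ?thesis by simp
  qed simp
  have "measure (P z) {\<omega>\<in>space M. Z (s + r) \<omega> \<in> B} =
          (\<integral>\<omega>. indicator (space M) \<omega> * measure (P (Z s \<omega>)) {\<omega>'\<in>space M. Z r \<omega>' \<in> B} \<partial>P z)"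
    using strong[of "\<lambda>_. s", THEN mp, rule_format, OF _ r B sets.top const_time] s
    by (simp add: stopping_time_const)
  also have "\<dots> = (\<integral>\<omega>. measure (P (Z s \<omega>)) {\<omega>'\<in>space M. Z r \<omega>' \<in> B} \<partial>P z)"
    by (rule Bochner_Integration.integral_cong) (auto simp: space_P[OF z])
  finally show ?thesis .
qed

lemma measurable_distr_Z:
  assumes r: "r \<ge> 0"
  shows "(\<lambda>y. distr (P y) borel (Z r)) \<in> measurable (restrict_space borel E) (subprob_algebra borel)"
proof (rule measurable_subprob_algebra)
  fix y assume "y \<in> space (restrict_space borel E)"
  then have y: "y \<in> E" by (simp add: space_restrict_space)
  show "subprob_space (distr (P y) borel (Z r))"
    by (intro prob_space_imp_subprob_space prob_space.prob_space_distr prob_space_P y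
        measurable_Z_P r)
next
  fix B :: "'a set" assume B: "B \<in> sets borel"
  have "(\<lambda>y. ennreal (measure (P y) {\<omega>\<in>space M. Z r \<omega> \<in> B})) \<in> borel_measurable (restrict_space borel E)"
    using measurable_prob_Z_in[OF r B] by measurable
  then show "(\<lambda>y. emeasure (distr (P y) borel (Z r)) B) \<in> borel_measurable (restrict_space borel E)"
    by (rule measurable_cong[THEN iffD1, rotated]) (simp add: space_restrict_space emeasure_distr_Z r B)
qed simp

lemma distr_Z_add_eq_bind:
  assumes z: "z \<in> E" and s: "s \<ge> 0" and r: "r \<ge> 0"
  shows "distr (P z) borel (Z (s + r)) =
    distr (P z) (restrict_space borel E) (Z s) \<bind> (\<lambda>y. distr (P y) borel (Z r))"
proof -
  let ?N = "distr (P z) (restrict_space borel E) (Z s)" and ?K = "\<lambda>y. distr (P y) borel (Z r)"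
  interpret prob_space "P z" using prob_space_P[OF z] .
  have K: "?K \<in> measurable ?N (subprob_algebra borel)"
    by (simp add: measurable_distr_Z[OF r])
  have N: "space ?N \<noteq> {}" using z by (auto simp: space_restrict_space)
  show ?thesis
  proof (rule measure_eqI)
    show "sets (distr (P z) borel (Z (s + r))) = sets (?N \<bind> ?K)"
      using sets_bind[OF subprob_measurableD(2)[OF K] N] by simp
    fix B assume "B \<in> sets (distr (P z) borel (Z (s + r)))"
    then have B: "B \<in> sets borel" by simp
    define g where "g \<omega> = measure (P (Z s \<omega>)) {\<omega>'\<in>space M. Z r \<omega>' \<in> B}" for \<omega>
    have g_bounded: "0 \<le> g \<omega> \<and> g \<omega> \<le> 1" if "\<omega> \<in> space (P z)" for \<omega>
    proof -
      have "Z s \<omega> \<in> E" using that Z_in_E s space_P[OF z] by auto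
      then show ?thesis by (simp add: g_def prob_space.prob_le_1 prob_space_P)
    qed
    have g_int: "integrable (P z) g"
    proof (rule integrable_const_bound[where B=1])
      show "g \<in> borel_measurable (P z)"
        unfolding g_def using measurable_compose[OF measurable_Z_P_restrict_E[OF z s] measurable_prob_Z_in[OF r B]] .
    qed (use g_bounded in auto)
    have "emeasure (distr (P z) borel (Z (s + r))) B = ennreal (\<integral>\<omega>. g \<omega> \<partial>P z)"
      using emeasure_distr_Z[OF z _ B, of "s + r"] markov_property[OF z s r B] s r by (simp add: g_def)
    also have "\<dots> = (\<integral>\<^sup>+\<omega>. emeasure (?K (Z s \<omega>)) B \<partial>P z)"
    proof (subst nn_integral_eq_integral[symmetric, OF g_int])
      show "(\<integral>\<^sup>+\<omega>. ennreal (g \<omega>) \<partial>P z) = (\<integral>\<^sup>+\<omega>. emeasure (?K (Z s \<omega>)) B \<partial>P z)"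
        using Z_in_E s space_P[OF z] by (intro nn_integral_cong) (simp add: g_def emeasure_distr_Z r B)
    qed (use g_bounded in auto)
    also have "\<dots> = (\<integral>\<^sup>+y. emeasure (?K y) B \<partial>?N)"
      by (rule nn_integral_distr[symmetric, OF measurable_Z_P_restrict_E[OF z s]])
         (simp only: measurable_distr_eq1, rule measurable_compose[OF measurable_distr_Z[OF r] measurable_emeasure_subprob_algebra[OF B]])
    also have "\<dots> = emeasure (?N \<bind> ?K) B"
      by (rule emeasure_bind[symmetric, OF N K B])
    finally show "emeasure (distr (P z) borel (Z (s + r))) B = emeasure (?N \<bind> ?K) B" .
  qed
qed

lemma nn_integral_markov:
  assumes z: "z \<in> E" and s: "s \<ge> 0" and r: "r \<ge> 0" and h: "h \<in> borel_measurable borel"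
  shows "(\<integral>\<^sup>+\<omega>. h (Z (s + r) \<omega>) \<partial>P z) = (\<integral>\<^sup>+\<omega>. (\<integral>\<^sup>+\<omega>'. h (Z r \<omega>') \<partial>P (Z s \<omega>)) \<partial>P z)"
proof -
  have "(\<integral>\<^sup>+\<omega>. h (Z (s + r) \<omega>) \<partial>P z) = (\<integral>\<^sup>+x. h x \<partial>distr (P z) borel (Z (s + r)))"
    by (rule nn_integral_distr[symmetric, OF measurable_Z_P[OF z]]) (use s r h in simp_all)
  also have "\<dots> = (\<integral>\<^sup>+y. \<integral>\<^sup>+x. h x \<partial>distr (P y) borel (Z r) \<partial>distr (P z) (restrict_space borel E) (Z s))"
    unfolding distr_Z_add_eq_bind[OF z s r]
    by (rule nn_integral_bind[OF h]) (simp add: measurable_distr_Z[OF r])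
  also have "\<dots> = (\<integral>\<^sup>+\<omega>. (\<integral>\<^sup>+x. h x \<partial>distr (P (Z s \<omega>)) borel (Z r)) \<partial>P z)"
    by (rule nn_integral_distr[OF measurable_Z_P_restrict_E[OF z s]])
       (simp only: measurable_distr_eq1, rule measurable_compose[OF measurable_distr_Z[OF r] nn_integral_measurable_subprob_algebra[OF h]])
  also have "\<dots> = (\<integral>\<^sup>+\<omega>. (\<integral>\<^sup>+\<omega>'. h (Z r \<omega>') \<partial>P (Z s \<omega>)) \<partial>P z)"
    using Z_in_E s r h space_P[OF z]
    by (intro nn_integral_cong nn_integral_distr measurable_Z_P h) auto
  finally show ?thesis .
qed

definition exp_moment :: "'a \<Rightarrow> 'a \<Rightarrow> real \<Rightarrow> ennreal" where
  "exp_moment a z t = (\<integral>\<^sup>+\<omega>. ennreal (exp (a \<bullet> (Z t \<omega> - z))) \<partial>P z)"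

text \<open>The maximum with 1 keeps powers of the bound increasing; enn2real is faithful only when
  the supremum is finite, as (H2) guarantees.\<close>
definition exp_moment_bound :: "'a \<Rightarrow> real" where
  "exp_moment_bound a = max 1 (enn2real (SUP z\<in>E. SUP t\<in>{0..1}. exp_moment a z t))"

lemma exp_moment_bound_ge_1: "1 \<le> exp_moment_bound a"
  by (simp add: exp_moment_bound_def)

lemma exp_moment_le_bound:
  assumes fin: "(SUP z\<in>E. SUP t\<in>{0..1}. exp_moment a z t) < \<infinity>" and "z \<in> E" "t \<in> {0..1}"
  shows "exp_moment a z t \<le> exp_moment_bound a"
proof -
  have "exp_moment a z t \<le> (SUP z\<in>E. SUP t\<in>{0..1}. exp_moment a z t)"
    using assms(2,3) by (intro SUP_upper2[OF assms(2)] SUP_upper)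
  also have "\<dots> = ennreal (enn2real (SUP z\<in>E. SUP t\<in>{0..1}. exp_moment a z t))"
    using fin by simp
  also have "\<dots> \<le> exp_moment_bound a"
    unfolding exp_moment_bound_def by (intro ennreal_leI) simp
  finally show ?thesis .
qed

lemma exp_moment_add_1_le:
  assumes fin: "(SUP z\<in>E. SUP t\<in>{0..1}. exp_moment a z t) < \<infinity>" and z: "z \<in> E" and s: "s \<ge> 0"
  shows "exp_moment a z (s + 1) \<le> exp_moment a z s * exp_moment_bound a"
proof -
  have [measurable]: "Z s \<in> borel_measurable (P z)"
    by (rule measurable_Z_P[OF z s])
  have "exp_moment a z (s + 1) =
      (\<integral>\<^sup>+\<omega>. (\<integral>\<^sup>+\<omega>'. ennreal (exp (a \<bullet> (Z 1 \<omega>' - z))) \<partial>P (Z s \<omega>)) \<partial>P z)"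
    unfolding exp_moment_def by (rule nn_integral_markov[OF z s]) simp_all
  also have "\<dots> \<le> (\<integral>\<^sup>+\<omega>. ennreal (exp (a \<bullet> (Z s \<omega> - z))) * exp_moment_bound a \<partial>P z)"
  proof (rule nn_integral_mono)
    fix \<omega> assume "\<omega> \<in> space (P z)"
    then have y: "Z s \<omega> \<in> E" using Z_in_E s space_P[OF z] by auto
    have [measurable]: "Z 1 \<in> borel_measurable (P (Z s \<omega>))"
      by (rule measurable_Z_P[OF y]) simp
    have "(\<integral>\<^sup>+\<omega>'. ennreal (exp (a \<bullet> (Z 1 \<omega>' - z))) \<partial>P (Z s \<omega>)) =
        (\<integral>\<^sup>+\<omega>'. ennreal (exp (a \<bullet> (Z s \<omega> - z))) * ennreal (exp (a \<bullet> (Z 1 \<omega>' - Z s \<omega>))) \<partial>P (Z s \<omega>))"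
      by (intro nn_integral_cong) (simp add: ennreal_mult'[symmetric] exp_add[symmetric] inner_diff_right)
    also have "\<dots> = ennreal (exp (a \<bullet> (Z s \<omega> - z))) * exp_moment a (Z s \<omega>) 1"
      unfolding exp_moment_def by (rule nn_integral_cmult) measurable
    also have "\<dots> \<le> ennreal (exp (a \<bullet> (Z s \<omega> - z))) * exp_moment_bound a"
      by (intro mult_left_mono exp_moment_le_bound[OF fin y]) auto
    finally show "(\<integral>\<^sup>+\<omega>'. ennreal (exp (a \<bullet> (Z 1 \<omega>' - z))) \<partial>P (Z s \<omega>))
        \<le> ennreal (exp (a \<bullet> (Z s \<omega> - z))) * exp_moment_bound a" .
  qed
  also have "\<dots> = exp_moment a z s * exp_moment_bound a"
    unfolding exp_moment_def by (rule nn_integral_multc) measurable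
  finally show ?thesis .
qed

lemma exp_moment_le_power:
  assumes fin: "(SUP z\<in>E. SUP t\<in>{0..1}. exp_moment a z t) < \<infinity>" and z: "z \<in> E"
    and "t \<in> {0..real (Suc k)}"
  shows "exp_moment a z t \<le> exp_moment_bound a ^ Suc k"
  using assms(3)
proof (induction k arbitrary: t)
  case 0
  then show ?case using exp_moment_le_bound[OF fin z] by simp
next
  case (Suc k)
  have bound_pos: "0 \<le> exp_moment_bound a" and bound_ge_1: "1 \<le> exp_moment_bound a"
    using exp_moment_bound_ge_1[of a] by simp_all
  show ?case
  proof (cases "t \<le> 1")
    case True
    then have "exp_moment a z t \<le> exp_moment_bound a"
      using exp_moment_le_bound[OF fin z] Suc.prems by simp
    also have "\<dots> \<le> exp_moment_bound a ^ Suc (Suc k)"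
      using power_increasing[of 1 "Suc (Suc k)" "exp_moment_bound a"] bound_ge_1
      by (intro ennreal_leI) simp
    finally show ?thesis .
  next
    case False
    then have "exp_moment a z t = exp_moment a z ((t - 1) + 1)" by simp
    also have "\<dots> \<le> exp_moment a z (t - 1) * exp_moment_bound a"
      using False by (intro exp_moment_add_1_le[OF fin z]) simp
    also have "\<dots> \<le> ennreal (exp_moment_bound a ^ Suc k) * exp_moment_bound a"
      using False Suc by (intro mult_right_mono Suc.IH) auto
    also have "\<dots> = exp_moment_bound a ^ Suc (Suc k)"
      using bound_pos by (simp add: ennreal_mult'[symmetric] mult.commute)
    finally show ?thesis .
  qed
qed

lemma exp_moment_le_powr:
  assumes fin: "(SUP z\<in>E. SUP t\<in>{0..1}. exp_moment a z t) < \<infinity>" and z: "z \<in> E" and t: "t \<ge> 0"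
  shows "exp_moment a z t \<le> exp_moment_bound a powr (t + 1)"
proof -
  define k where "k = nat \<lfloor>t\<rfloor>"
  have k: "t \<le> real (Suc k)" "real (Suc k) \<le> t + 1"
    using t by (auto simp: k_def) linarith+
  have "exp_moment a z t \<le> exp_moment_bound a ^ Suc k"
    using k t by (intro exp_moment_le_power[OF fin z]) simp
  also have "exp_moment_bound a ^ Suc k = exp_moment_bound a powr real (Suc k)"
    using exp_moment_bound_ge_1[of a] by (intro powr_realpow[symmetric]) simp
  also have "\<dots> \<le> exp_moment_bound a powr (t + 1)"
    using k exp_moment_bound_ge_1[of a] by (intro powr_mono) auto
  finally show ?thesis by (simp add: ennreal_leI)
qed

lemma prob_Z_in_le_exp:
  assumes fin: "(SUP z\<in>E. SUP t\<in>{0..1}. exp_moment a z t) < \<infinity>" and z: "z \<in> E" and t: "t \<ge> 0"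
    and U: "U \<in> sets borel" and far: "\<And>x. x \<in> U \<Longrightarrow> c \<le> a \<bullet> (x - z)"
  shows "measure (P z) {\<omega>\<in>space M. Z t \<omega> \<in> U} \<le> exp (-c) * exp_moment_bound a powr (t + 1)"
proof -
  interpret prob_space "P z" using prob_space_P[OF z] .
  have [measurable]: "Z t \<in> borel_measurable (P z)" by (rule measurable_Z_P[OF z t])
  define S where "S = {\<omega>\<in>space M. Z t \<omega> \<in> U}"
  have "S = Z t -` U \<inter> space (P z)" by (auto simp: S_def space_P[OF z])
  then have S: "S \<in> sets (P z)" using U by simp
  have "emeasure (P z) S = (\<integral>\<^sup>+\<omega>. indicator S \<omega> \<partial>P z)"
    by (rule nn_integral_indicator[symmetric, OF S])
  also have "\<dots> \<le> (\<integral>\<^sup>+\<omega>. ennreal (exp (-c)) * ennreal (exp (a \<bullet> (Z t \<omega> - z))) \<partial>P z)"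
  proof (rule nn_integral_mono)
    fix \<omega>
    have "1 \<le> exp (-c) * exp (a \<bullet> (Z t \<omega> - z))" if "\<omega> \<in> S"
      using far[of "Z t \<omega>"] that by (simp add: S_def exp_add[symmetric])
    then show "indicator S \<omega> \<le> ennreal (exp (-c)) * ennreal (exp (a \<bullet> (Z t \<omega> - z)))"
      by (cases "\<omega> \<in> S") (simp_all add: ennreal_mult'[symmetric])
  qed
  also have "\<dots> = ennreal (exp (-c)) * exp_moment a z t"
    unfolding exp_moment_def by (rule nn_integral_cmult) measurable
  also have "\<dots> \<le> ennreal (exp (-c)) * ennreal (exp_moment_bound a powr (t + 1))"
    by (intro mult_left_mono exp_moment_le_powr[OF fin z t]) simp
  also have "\<dots> = ennreal (exp (-c) * exp_moment_bound a powr (t + 1))"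
    by (simp add: ennreal_mult'[symmetric])
  finally show ?thesis
    unfolding S_def by (simp add: emeasure_eq_measure ennreal_le_iff)
qed

text \<open>Right-continuity of the paths makes Z the pointwise limit of its values at dyadic times
  approached from the right. Time is clamped at 0 since nothing is assumed about Z at negative times.\<close>
lemma measurable_Z_pair: "(\<lambda>p::real \<times> 'w. Z (max 0 (fst p)) (snd p)) \<in> borel_measurable (borel \<Otimes>\<^sub>M M)"
proof (rule borel_measurable_LIMSEQ_metric)
  fix m :: nat
  show "(\<lambda>p::real \<times> 'w. Z (real (nat \<lceil>max 0 (fst p) * 2^m\<rceil>) / 2^m) (snd p)) \<in> borel_measurable (borel \<Otimes>\<^sub>M M)"
  proof (rule measurable_compose_countable'[where I=UNIV, of "\<lambda>i p. Z (real i / 2^m) (snd p)"])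
    fix i :: nat
    show "(\<lambda>p::real \<times> 'w. Z (real i / 2^m) (snd p)) \<in> borel_measurable (borel \<Otimes>\<^sub>M M)"
      by (rule measurable_compose[OF measurable_snd measurable_Z]) simp
  qed measurable
next
  fix p :: "real \<times> 'w" assume "p \<in> space (borel \<Otimes>\<^sub>M M)"
  then have \<omega>: "snd p \<in> space M" by (auto simp: space_pair_measure)
  define t where "t = max 0 (fst p)"
  have t: "t \<ge> 0" by (simp add: t_def)
  have "continuous (at_right t) (\<lambda>t. Z t (snd p))"
    using cadlag_Z[OF \<omega>] t by (simp add: cadlag_def)
  then have "continuous (at t within {t..}) (\<lambda>t. Z t (snd p))"
    by (simp add: at_within_Ici_at_right)
  then show "(\<lambda>m. Z (real (nat \<lceil>max 0 (fst p) * 2^m\<rceil>) / 2^m) (snd p)) \<longlonglongrightarrow> Z (max 0 (fst p)) (snd p)"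
    using dyadic_ceiling_approx[OF t] unfolding continuous_within_sequentially
    by (simp add: t_def o_def)
qed

lemma borel_measurable_prob_Z_in:
  assumes z: "z \<in> E" and U: "U \<in> sets borel"
  shows "(\<lambda>t. measure (P z) {\<omega>\<in>space M. Z (max 0 t) \<omega> \<in> U}) \<in> borel_measurable borel"
proof -
  interpret prob_space "P z" using prob_space_P[OF z] .
  have "sets (borel \<Otimes>\<^sub>M P z) = sets (borel \<Otimes>\<^sub>M M)"
    by (rule sets_pair_measure_cong) (simp_all add: sets_P z)
  then have "(\<lambda>p. Z (max 0 (fst p)) (snd p)) \<in> borel_measurable (borel \<Otimes>\<^sub>M P z)"
    using measurable_Z_pair measurable_cong_sets by blast
  then have Q: "(\<lambda>p. Z (max 0 (fst p)) (snd p)) -` U \<inter> space (borel \<Otimes>\<^sub>M P z) \<in> sets (borel \<Otimes>\<^sub>M P z)"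
    (is "?Q \<in> _") using U by (rule measurable_sets)
  have "(\<lambda>t. enn2real (emeasure (P z) (Pair t -` ?Q))) \<in> borel_measurable borel"
    using measurable_emeasure_Pair[OF Q] by measurable
  moreover have "Pair t -` ?Q = {\<omega>\<in>space M. Z (max 0 t) \<omega> \<in> U}" for t
    by (auto simp: space_pair_measure space_P[OF z])
  ultimately show ?thesis by (simp add: measure_def)
qed

lemma set_integrable_prob_Z_in:
  assumes z: "z \<in> E" and U: "U \<in> sets borel"
  shows "set_integrable lborel {0..T} (\<lambda>t. measure (P z) {\<omega>\<in>space M. Z t \<omega> \<in> U})"
proof -
  interpret prob_space "P z" using prob_space_P[OF z] .
  have "integrable lborel (\<lambda>t. indicator {0..T} t *\<^sub>R measure (P z) {\<omega>\<in>space M. Z (max 0 t) \<omega> \<in> U})"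
    using borel_measurable_prob_Z_in[OF z U]
    by (intro integrableI_bounded_set[where A="{0..T}" and B=1])
       (auto simp: indicator_def emeasure_lborel_Icc_eq)
  also have "(\<lambda>t. indicator {0..T} t *\<^sub>R measure (P z) {\<omega>\<in>space M. Z (max 0 t) \<omega> \<in> U}) =
      (\<lambda>t. indicator {0..T} t *\<^sub>R measure (P z) {\<omega>\<in>space M. Z t \<omega> \<in> U})"
    by (auto simp: indicator_def fun_eq_iff)
  finally show ?thesis by (simp add: set_integrable_def)
qed

definition occupation :: "'a \<Rightarrow> real \<Rightarrow> 'a set \<Rightarrow> real" where
  "occupation z T U = (LINT t:{0..T}|lborel. measure (P z) {\<omega>\<in>space M. Z t \<omega> \<in> U})"

lemma occupation_mono:
  assumes z: "z \<in> E" and U: "U \<in> sets borel" and V: "V \<in> sets borel" and "U \<subseteq> V"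
  shows "occupation z T U \<le> occupation z T V"
proof -
  interpret prob_space "P z" using prob_space_P[OF z] .
  have "measure (P z) {\<omega>\<in>space M. Z t \<omega> \<in> U} \<le> measure (P z) {\<omega>\<in>space M. Z t \<omega> \<in> V}"
    if "t \<in> {0..T}" for t
  proof (rule finite_measure_mono)
    show "{\<omega>\<in>space M. Z t \<omega> \<in> V} \<in> sets (P z)"
      using that measurable_sets[OF measurable_Z_P[OF z] V]
      by (simp add: space_P[OF z] vimage_def Int_def conj_commute)
  qed (use \<open>U \<subseteq> V\<close> in auto)
  then show ?thesis
    unfolding occupation_def
    by (rule set_integral_mono[OF set_integrable_prob_Z_in[OF z U] set_integrable_prob_Z_in[OF z V]])
qed

lemma occupation_le:
  assumes z: "z \<in> E" and U: "U \<in> sets borel" and T: "T \<ge> 0"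
    and bound: "\<And>t. t \<in> {0..T} \<Longrightarrow> measure (P z) {\<omega>\<in>space M. Z t \<omega> \<in> U} \<le> C"
  shows "occupation z T U \<le> T * C"
proof -
  have "occupation z T U \<le> (LINT t:{0..T}|lborel. C)"
    unfolding occupation_def
    by (intro set_integral_mono set_integrable_prob_Z_in z U bound borel_integrable_atLeastAtMost')
       simp_all
  also have "\<dots> = T * C" using T by (subst set_integral_const) auto
  finally show ?thesis .
qed

lemma occupation_scaled_ball_le:
  fixes a q q' :: 'a
  assumes fin: "(SUP z\<in>E. SUP t\<in>{0..1}. exp_moment a z t) < \<infinity>"
    and \<kappa>: "\<kappa> > 0" and n: "n > 0" and z: "z \<in> E" "norm (z - n *\<^sub>R q) < \<delta> * n"
  defines "c \<equiv> a \<bullet> (q' - q) - 2 * norm a * \<delta>" and "l \<equiv> ln (exp_moment_bound a)"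
  shows "occupation z (\<kappa> * n) ((\<lambda>x. n *\<^sub>R x) ` ball q' \<delta>) \<le> exp (ln \<kappa> + ln n + l - n * (c - \<kappa> * l))"
proof -
  define U where "U = (\<lambda>x. n *\<^sub>R x) ` ball q' \<delta>"
  have U: "U \<in> sets borel"
    unfolding U_def using n by (intro borel_open open_scaling) auto
  have far: "n * c \<le> a \<bullet> (x - z)" if "x \<in> U" for x
  proof -
    obtain y where "y \<in> ball q' \<delta>" and x: "x = n *\<^sub>R y" using \<open>x \<in> U\<close> by (auto simp: U_def)
    then have "norm (y - q') < \<delta>" by (simp add: dist_norm norm_minus_commute)
    then show ?thesis
      unfolding x c_def using z(2) n by (intro inner_scaled_displacement_ge) auto
  qed
  have bound_pos: "exp_moment_bound a > 0"
    using exp_moment_bound_ge_1[of a] by simp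
  have "measure (P z) {\<omega>\<in>space M. Z t \<omega> \<in> U} \<le> exp (- (n * c) + (\<kappa> * n + 1) * l)"
    if t: "t \<in> {0..\<kappa> * n}" for t
  proof -
    have "measure (P z) {\<omega>\<in>space M. Z t \<omega> \<in> U} \<le> exp (- (n * c)) * exp_moment_bound a powr (t + 1)"
      using t by (intro prob_Z_in_le_exp[OF fin z(1) _ U far]) auto
    also have "\<dots> \<le> exp (- (n * c)) * exp_moment_bound a powr (\<kappa> * n + 1)"
      using t exp_moment_bound_ge_1[of a] by (intro mult_left_mono powr_mono) auto
    also have "\<dots> = exp (- (n * c) + (\<kappa> * n + 1) * l)"
      using bound_pos by (simp add: l_def powr_def flip: exp_add)
    finally show ?thesis .
  qed
  then have "occupation z (\<kappa> * n) U \<le> \<kappa> * n * exp (- (n * c) + (\<kappa> * n + 1) * l)"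
    using \<kappa> n by (intro occupation_le[OF z(1) U]) auto
  also have "\<dots> = exp (ln \<kappa> + ln n + l - n * (c - \<kappa> * l))"
    using \<kappa> n by (simp add: exp_add exp_diff algebra_simps)
  finally show ?thesis by (simp add: U_def)
qed

definition occupation_rate :: "real \<Rightarrow> 'a \<Rightarrow> 'a \<Rightarrow> real \<Rightarrow> ereal" where
  "occupation_rate \<kappa> q q' \<delta> = Limsup at_top (\<lambda>n::real.
     SUP z\<in>{z\<in>E. norm (z - n *\<^sub>R q) < \<delta> * n}.
       eln (occupation z (\<kappa> * n) ((\<lambda>x. n *\<^sub>R x) ` ball q' \<delta>)) / ereal n)"

lemma occupation_rate_mono:
  assumes "0 < \<delta>" "\<delta> \<le> \<delta>'"
  shows "occupation_rate \<kappa> q q' \<delta> \<le> occupation_rate \<kappa> q q' \<delta>'"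
  unfolding occupation_rate_def
proof (intro Limsup_mono eventually_mono[OF eventually_gt_at_top[of "0::real"]] SUP_mono)
  fix n :: real and z assume n: "0 < n" and z: "z \<in> {z\<in>E. norm (z - n *\<^sub>R q) < \<delta> * n}"
  have "\<delta> * n \<le> \<delta>' * n" using assms n by simp
  then have "z \<in> {z\<in>E. norm (z - n *\<^sub>R q) < \<delta>' * n}" using z by auto
  moreover have "occupation z (\<kappa> * n) ((\<lambda>x. n *\<^sub>R x) ` ball q' \<delta>)
      \<le> occupation z (\<kappa> * n) ((\<lambda>x. n *\<^sub>R x) ` ball q' \<delta>')"
    using z assms n by (intro occupation_mono borel_open open_scaling image_mono) auto
  ultimately show "\<exists>z'\<in>{z\<in>E. norm (z - n *\<^sub>R q) < \<delta>' * n}.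
      eln (occupation z (\<kappa> * n) ((\<lambda>x. n *\<^sub>R x) ` ball q' \<delta>)) / ereal n
      \<le> eln (occupation z' (\<kappa> * n) ((\<lambda>x. n *\<^sub>R x) ` ball q' \<delta>')) / ereal n"
    using n by (intro bexI[of _ z] ereal_divide_right_mono eln_mono) auto
qed

lemma occupation_rate_le:
  assumes fin: "(SUP z\<in>E. SUP t\<in>{0..1}. exp_moment a z t) < \<infinity>" and \<kappa>: "\<kappa> > 0"
  shows "occupation_rate \<kappa> q q' \<delta> \<le> ereal (\<kappa> * ln (exp_moment_bound a) - (a \<bullet> (q' - q) - 2 * norm a * \<delta>))"
proof -
  define c where "c = a \<bullet> (q' - q) - 2 * norm a * \<delta>"
  define l where "l = ln (exp_moment_bound a)"
  define b where "b n = (ln \<kappa> + ln n + l) / n - (c - \<kappa> * l)" for n :: real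
  have "\<forall>\<^sub>F n in at_top.
      (SUP z\<in>{z\<in>E. norm (z - n *\<^sub>R q) < \<delta> * n}. eln (occupation z (\<kappa> * n) ((\<lambda>x. n *\<^sub>R x) ` ball q' \<delta>)) / ereal n)
    \<le> ereal (b n)"
  proof (intro eventually_mono[OF eventually_gt_at_top[of "0::real"]] SUP_least)
    fix n :: real and z assume n: "0 < n" and "z \<in> {z\<in>E. norm (z - n *\<^sub>R q) < \<delta> * n}"
    then have z: "z \<in> E" "norm (z - n *\<^sub>R q) < \<delta> * n" by auto
    have "eln (occupation z (\<kappa> * n) ((\<lambda>x. n *\<^sub>R x) ` ball q' \<delta>)) / ereal n
        \<le> ereal ((ln \<kappa> + ln n + l - n * (c - \<kappa> * l)) / n)"
      unfolding c_def l_def by (rule eln_divide_le[OF occupation_scaled_ball_le[OF fin \<kappa> n z] n])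
    also have "\<dots> = ereal (b n)"
      using n by (simp add: b_def field_simps)
    finally show "eln (occupation z (\<kappa> * n) ((\<lambda>x. n *\<^sub>R x) ` ball q' \<delta>)) / ereal n \<le> ereal (b n)" .
  qed
  then have "occupation_rate \<kappa> q q' \<delta> \<le> Limsup at_top (\<lambda>n. ereal (b n))"
    unfolding occupation_rate_def by (rule Limsup_mono)
  also have "\<dots> = ereal (\<kappa> * l - c)"
  proof (rule lim_imp_Limsup[OF trivial_limit_at_top_linorder], rule tendsto_ereal)
    show "(b \<longlongrightarrow> \<kappa> * l - c) at_top"
      unfolding b_def by real_asymp
  qed
  finally show ?thesis by (simp add: c_def l_def)
qed

end

theorem lemma3p1:
  fixes E :: "'a::euclidean_space set" and M :: "'w measure" and F :: "real \<Rightarrow> 'w measure"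
    and P :: "'a \<Rightarrow> 'w measure" and Z :: "real \<Rightarrow> 'w \<Rightarrow> 'a"
    and q q' :: 'a and A :: real
  assumes unbounded: "\<not> bounded E"
    and markov: "strong_markov_process E M F P Z"
    and H2: "\<forall>a::'a. (SUP z\<in>E. SUP t\<in>{0..1}.
               \<integral>\<^sup>+\<omega>. ennreal (exp (a \<bullet> (Z t \<omega> - z))) \<partial>P z) < \<infinity>"
    and "q \<noteq> q'" and "A > 0"
  shows "\<exists>\<kappa>>0. \<exists>L. ((\<lambda>\<delta>. Limsup at_top (\<lambda>n::real.
              SUP z\<in>{z\<in>E. norm (z - n *\<^sub>R q) < \<delta> * n}.
                eln (LINT t:{0..\<kappa> * n}|lborel.
                       measure (P z) {\<omega>\<in>space M. Z t \<omega> \<in> (\<lambda>x. n *\<^sub>R x) ` ball q' \<delta>})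
                / ereal n))
             \<longlongrightarrow> L) (at_right 0) \<and> L \<le> ereal (- A)"
proof -
  interpret process: strong_markov E M F P Z by (rule strong_markov.intro[OF markov])
  define a where "a = ((A + 2) / (norm (q' - q))\<^sup>2) *\<^sub>R (q' - q)"
  have a_q: "a \<bullet> (q' - q) = A + 2"
    using \<open>q \<noteq> q'\<close> by (simp add: a_def power2_norm_eq_inner)
  have "a \<noteq> 0" using a_q \<open>A > 0\<close> by auto
  define \<delta> where "\<delta> = 1 / (2 * norm a)"
  have \<delta>: "\<delta> > 0" "2 * norm a * \<delta> = 1" using \<open>a \<noteq> 0\<close> by (simp_all add: \<delta>_def)
  define l where "l = ln (process.exp_moment_bound a)"
  have "l \<ge> 0" using process.exp_moment_bound_ge_1[of a] by (simp add: l_def)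
  define \<kappa> where "\<kappa> = 1 / (1 + l)"
  have \<kappa>: "\<kappa> > 0" "\<kappa> * l \<le> 1" using \<open>l \<ge> 0\<close> by (simp_all add: \<kappa>_def field_simps)
  have fin: "(SUP z\<in>E. SUP t\<in>{0..1}. process.exp_moment a z t) < \<infinity>"
    using H2 by (simp add: process.exp_moment_def)
  have "(INF \<delta>'\<in>{0<..}. process.occupation_rate \<kappa> q q' \<delta>') \<le> process.occupation_rate \<kappa> q q' \<delta>"
    using \<delta> by (intro INF_lower) simp
  also have "\<dots> \<le> ereal (\<kappa> * l - (a \<bullet> (q' - q) - 2 * norm a * \<delta>))"
    unfolding l_def by (rule process.occupation_rate_le[OF fin \<kappa>(1)])
  also have "\<dots> \<le> ereal (- A)"
    using a_q \<delta> \<kappa> by simp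
  finally have "(INF \<delta>'\<in>{0<..}. process.occupation_rate \<kappa> q q' \<delta>') \<le> ereal (- A)" .
  moreover have "(process.occupation_rate \<kappa> q q' \<longlongrightarrow> (INF \<delta>'\<in>{0<..}. process.occupation_rate \<kappa> q q' \<delta>')) (at_right 0)"
    by (intro tendsto_at_right_0_INF_mono process.occupation_rate_mono)
  ultimately show ?thesis
    using \<kappa>(1) unfolding process.occupation_rate_def process.occupation_def by blast
qed

end
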